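(* Let $X$ be a complex Banach space and $\Gamma\subset\mathcal{B}(X)$ such that $TS\in\Gamma$ for all $T,S\in\Gamma$. Let $\lambda:\Gamma\to\mathbb{T}$, $T\mapsto\lambda_T$, satisfy $\lambda_{TS}=\lambda_T\lambda_S$ for all $T,S\in\Gamma$, where $\mathbb{T}=\{\alpha\in\mathbb{C}:|\alpha|=1\}$. Then $\Gamma$ is recurrent if and only if $\Gamma_1=\{\lambda_TT:T\in\Gamma\}$ is recurrent.
   Context: $\mathcal{B}(X)$ denotes the algebra of bounded linear operators on $X$. A set $\Gamma\subset\mathcal{B}(X)$ is called recurrent if for every nonempty open subset $U$ of $X$ there exists $T\in\Gamma$ with $T(U)\cap U\neq\emptyset$. *)

theory Defs
  imports "HOL-Analysis.Analysis"
begin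

text \<open>Isabelle/HOL's distribution has no type class of complex vector spaces, so a complex
Banach space is modelled as a real Banach space (type class banach) together with a complex
scalar multiplication sm that extends the real one and is compatible with the norm.\<close>
definition complex_banach_scalar :: "(complex \<Rightarrow> 'a::banach \<Rightarrow> 'a) \<Rightarrow> bool" where
  "complex_banach_scalar sm \<longleftrightarrow>
     (\<forall>a x y. sm a (x + y) = sm a x + sm a y) \<and>
     (\<forall>a b x. sm (a + b) x = sm a x + sm b x) \<and>
     (\<forall>a b x. sm a (sm b x) = sm (a * b) x) \<and>
     (\<forall>r x. sm (complex_of_real r) x = r *\<^sub>R x) \<and>
     (\<forall>a x. norm (sm a x) = cmod a * norm x)"

definition bounded_complex_operator ::
    "(complex \<Rightarrow> 'a::banach \<Rightarrow> 'a) \<Rightarrow> ('a \<Rightarrow> 'a) \<Rightarrow> bool" where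
  "bounded_complex_operator sm T \<longleftrightarrow> bounded_linear T \<and> (\<forall>c x. T (sm c x) = sm c (T x))"

definition recurrent_set :: "('a::topological_space \<Rightarrow> 'a) set \<Rightarrow> bool" where
  "recurrent_set \<Gamma> \<longleftrightarrow> (\<forall>U. open U \<and> U \<noteq> {} \<longrightarrow> (\<exists>T\<in>\<Gamma>. T ` U \<inter> U \<noteq> {}))"

end

theory Submission
  imports Defs
begin

text \<open>Recurrence can always be realised by operators whose character value is close to 1: if
\<open>\<Gamma>\<close> is recurrent, then for every \<open>\<epsilon> > 0\<close> and nonempty open \<open>V\<close> some \<open>T \<in> \<Gamma>\<close> returns a point
of \<open>V\<close> to \<open>V\<close> with \<open>|\<lambda>\<^sub>T - 1| < \<epsilon>\<close>. Otherwise, applying recurrence repeatedly inside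
\<open>V \<inter> T\<^sub>1\<^sup>-\<^sup>1(V)\<close> and composing with \<open>T\<^sub>1\<close> (which rotates the character values already found
by \<open>\<lambda>\<^sub>T\<^sub>1\<close> and adds \<open>\<lambda>\<^sub>T\<^sub>1\<close> itself) yields arbitrarily large \<open>\<epsilon>\<close>-separated subsets of the
unit circle, which is impossible by compactness. For such a \<open>T\<close>, the point \<open>\<lambda>\<^sub>T T x\<close> is
within \<open>\<epsilon> \<parallel>T x\<parallel>\<close> of \<open>T x\<close>, so it still lies in a slightly larger open set. This shows that
recurrence of \<open>\<Gamma>\<close> passes to \<open>\<Gamma>\<^sub>1\<close>; the converse is the same statement for \<open>\<Gamma>\<^sub>1\<close> twisted by
the conjugate character.\<close>

definition separated_set :: "real \<Rightarrow> 'a::metric_space set \<Rightarrow> bool" where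
  "separated_set \<epsilon> Z \<longleftrightarrow> (\<forall>z\<in>Z. \<forall>w\<in>Z. z \<noteq> w \<longrightarrow> \<epsilon> \<le> dist z w)"

lemma compact_separated_set_card_bound:
  fixes K :: "'a::metric_space set"
  assumes "compact K" "\<epsilon> > 0"
  obtains N where "\<And>Z. finite Z \<Longrightarrow> Z \<subseteq> K \<Longrightarrow> separated_set \<epsilon> Z \<Longrightarrow> card Z \<le> N"
proof -
  obtain k where k: "finite k" "K \<subseteq> (\<Union>c\<in>k. ball c (\<epsilon>/2))"
    using seq_compact_imp_totally_bounded[OF compact_imp_seq_compact[OF assms(1)]] assms(2)
    by (meson half_gt_zero)
  show thesis
  proof (rule that)
    fix Z assume Z: "finite Z" "Z \<subseteq> K" "separated_set \<epsilon> Z"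
    have "\<forall>z\<in>Z. \<exists>c\<in>k. dist c z < \<epsilon>/2"
      using Z(2) k(2) by fastforce
    then obtain g where g: "\<And>z. z \<in> Z \<Longrightarrow> g z \<in> k \<and> dist (g z) z < \<epsilon>/2"
      by metis
    have "inj_on g Z"
    proof (rule inj_onI, rule ccontr)
      fix z w assume zw: "z \<in> Z" "w \<in> Z" "g z = g w" "z \<noteq> w"
      have "dist z w \<le> dist (g z) z + dist (g w) w"
        using zw(3) by (metis dist_commute dist_triangle)
      also have "\<dots> < \<epsilon>" using g[OF zw(1)] g[OF zw(2)] by linarith
      finally show False using Z(3) zw unfolding separated_set_def by force
    qed
    then show "card Z \<le> card k"
      using card_inj_on_le[of g Z k] g k(1) by blast
  qed
qed

lemma separated_set_rotate_insert:
  fixes \<alpha> :: complex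
  assumes \<alpha>: "cmod \<alpha> = 1" and Z: "separated_set \<epsilon> Z" and far: "\<forall>z\<in>Z. \<epsilon> \<le> cmod (z - 1)"
  shows "separated_set \<epsilon> (insert \<alpha> ((*) \<alpha> ` Z))"
proof -
  have rot: "cmod (\<alpha> * a - \<alpha> * b) = cmod (a - b)" for a b
    by (metis \<alpha> mult_1 norm_mult right_diff_distrib)
  have "cmod (\<alpha> - \<alpha> * z) = cmod (z - 1)" for z
    using rot[of 1 z] by (simp add: norm_minus_commute)
  then show ?thesis
    using Z far rot unfolding separated_set_def dist_norm
    by (auto simp: norm_minus_commute)
qed

lemma card_rotate_insert:
  fixes \<alpha> :: complex
  assumes "cmod \<alpha> = 1" "finite Z" "\<epsilon> > 0" "\<forall>z\<in>Z. \<epsilon> \<le> cmod (z - 1)"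
  shows "card (insert \<alpha> ((*) \<alpha> ` Z)) = Suc (card Z)"
proof -
  have "\<alpha> \<noteq> 0" using assms(1) by auto
  then have "\<alpha> \<notin> (*) \<alpha> ` Z" "inj_on ((*) \<alpha>) Z"
    using assms(3,4) by (auto simp: inj_on_def)
  then show ?thesis using assms(2) by (simp add: card_image)
qed

lemma character_values_compose:
  fixes f :: "'b \<Rightarrow> 'a \<Rightarrow> 'a" and lam :: "'b \<Rightarrow> complex"
  assumes closed: "\<forall>T\<in>G. \<forall>S\<in>G. mul T S \<in> G"
    and f_comp: "\<forall>T\<in>G. \<forall>S\<in>G. f (mul T S) = f T \<circ> f S"
    and lam_comp: "\<forall>T\<in>G. \<forall>S\<in>G. lam (mul T S) = lam T * lam S"
    and T\<^sub>1: "T\<^sub>1 \<in> G" and W: "W \<subseteq> V \<inter> f T\<^sub>1 -` V"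
    and Z_values: "\<forall>z\<in>Z. \<exists>T\<in>G. lam T = z \<and> f T ` W \<subseteq> V \<inter> f T\<^sub>1 -` V"
  shows "\<forall>z\<in>insert (lam T\<^sub>1) ((*) (lam T\<^sub>1) ` Z). \<exists>T\<in>G. lam T = z \<and> f T ` W \<subseteq> V"
proof
  fix z assume "z \<in> insert (lam T\<^sub>1) ((*) (lam T\<^sub>1) ` Z)"
  then consider "z = lam T\<^sub>1" | a where "a \<in> Z" "z = lam T\<^sub>1 * a"
    by blast
  then show "\<exists>T\<in>G. lam T = z \<and> f T ` W \<subseteq> V"
  proof cases
    case 1
    then show ?thesis using T\<^sub>1 W by blast
  next
    case (2 a)
    then obtain T where T: "T \<in> G" "lam T = a" "f T ` W \<subseteq> V \<inter> f T\<^sub>1 -` V"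
      using Z_values by blast
    have "f (mul T\<^sub>1 T) ` W \<subseteq> V"
      using T(1,3) f_comp T\<^sub>1 by auto
    moreover have "mul T\<^sub>1 T \<in> G" "lam (mul T\<^sub>1 T) = z"
      using closed lam_comp T\<^sub>1 T(1,2) 2(2) by auto
    ultimately show ?thesis by blast
  qed
qed

lemma exists_separated_character_values:
  fixes f :: "'b \<Rightarrow> 'a::topological_space \<Rightarrow> 'a" and lam :: "'b \<Rightarrow> complex"
  assumes cont: "\<forall>T\<in>G. continuous_on UNIV (f T)"
    and closed: "\<forall>T\<in>G. \<forall>S\<in>G. mul T S \<in> G"
    and f_comp: "\<forall>T\<in>G. \<forall>S\<in>G. f (mul T S) = f T \<circ> f S"
    and lam_comp: "\<forall>T\<in>G. \<forall>S\<in>G. lam (mul T S) = lam T * lam S"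
    and lam_unimodular: "\<forall>T\<in>G. cmod (lam T) = 1"
    and rec: "recurrent_set (f ` G)"
    and far: "\<forall>T\<in>G. \<forall>x\<in>V\<^sub>0. f T x \<in> V\<^sub>0 \<longrightarrow> \<epsilon> \<le> cmod (lam T - 1)"
    and \<epsilon>: "\<epsilon> > 0"
    and V: "open V" "V \<noteq> {}" "V \<subseteq> V\<^sub>0"
  shows "\<exists>W Z. open W \<and> W \<noteq> {} \<and> W \<subseteq> V \<and> finite Z \<and> card Z = n \<and> separated_set \<epsilon> Z \<and>
           (\<forall>z\<in>Z. \<exists>T\<in>G. lam T = z \<and> f T ` W \<subseteq> V)"
  using V
proof (induction n arbitrary: V)
  case 0
  then show ?case
    by (intro exI[of _ V] exI[of _ "{}"]) (auto simp: separated_set_def)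
next
  case (Suc n)
  obtain T\<^sub>1 where T\<^sub>1: "T\<^sub>1 \<in> G" "f T\<^sub>1 ` V \<inter> V \<noteq> {}"
    using rec Suc.prems unfolding recurrent_set_def by blast
  define V\<^sub>1 where "V\<^sub>1 = V \<inter> f T\<^sub>1 -` V"
  have "open V\<^sub>1"
    unfolding V\<^sub>1_def using Suc.prems cont T\<^sub>1(1) continuous_on_open_vimage[of UNIV "f T\<^sub>1"] by auto
  moreover have "V\<^sub>1 \<noteq> {}" "V\<^sub>1 \<subseteq> V\<^sub>0"
    unfolding V\<^sub>1_def using T\<^sub>1(2) Suc.prems(3) by auto
  ultimately obtain W Z where W: "open W" "W \<noteq> {}" "W \<subseteq> V\<^sub>1"
    and Z: "finite Z" "card Z = n" "separated_set \<epsilon> Z"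
    and Z_values: "\<forall>z\<in>Z. \<exists>T\<in>G. lam T = z \<and> f T ` W \<subseteq> V\<^sub>1"
    using Suc.IH[of V\<^sub>1] by blast
  have far_one: "\<forall>z\<in>Z. \<epsilon> \<le> cmod (z - 1)"
  proof
    fix z assume "z \<in> Z"
    then obtain T where "T \<in> G" "lam T = z" "f T ` W \<subseteq> V\<^sub>1" using Z_values by blast
    moreover obtain x where "x \<in> W" using W(2) by blast
    ultimately show "\<epsilon> \<le> cmod (z - 1)"
      using far W(3) Suc.prems(3) unfolding V\<^sub>1_def by blast
  qed
  define Z' where "Z' = insert (lam T\<^sub>1) ((*) (lam T\<^sub>1) ` Z)"
  have lam1: "cmod (lam T\<^sub>1) = 1" using lam_unimodular T\<^sub>1(1) by blast
  have "card Z' = Suc n"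
    unfolding Z'_def using card_rotate_insert[OF lam1 Z(1) \<epsilon> far_one] Z(2) by simp
  moreover have "separated_set \<epsilon> Z'"
    unfolding Z'_def using separated_set_rotate_insert[OF lam1 Z(3) far_one] .
  moreover have "\<forall>z\<in>Z'. \<exists>T\<in>G. lam T = z \<and> f T ` W \<subseteq> V"
    unfolding Z'_def using character_values_compose[OF closed f_comp lam_comp T\<^sub>1(1)] W(3) Z_values
    unfolding V\<^sub>1_def by blast
  moreover have "W \<subseteq> V" "finite Z'"
    using W(3) Z(1) unfolding V\<^sub>1_def Z'_def by auto
  ultimately show ?case
    using W(1,2) by blast
qed

lemma recurrent_character_close_to_one:
  fixes f :: "'b \<Rightarrow> 'a::topological_space \<Rightarrow> 'a" and lam :: "'b \<Rightarrow> complex"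
  assumes cont: "\<forall>T\<in>G. continuous_on UNIV (f T)"
    and closed: "\<forall>T\<in>G. \<forall>S\<in>G. mul T S \<in> G"
    and f_comp: "\<forall>T\<in>G. \<forall>S\<in>G. f (mul T S) = f T \<circ> f S"
    and lam_comp: "\<forall>T\<in>G. \<forall>S\<in>G. lam (mul T S) = lam T * lam S"
    and lam_unimodular: "\<forall>T\<in>G. cmod (lam T) = 1"
    and rec: "recurrent_set (f ` G)"
    and \<epsilon>: "\<epsilon> > 0"
    and V: "open V" "V \<noteq> {}"
  shows "\<exists>T\<in>G. \<exists>x\<in>V. f T x \<in> V \<and> cmod (lam T - 1) < \<epsilon>"
proof (rule ccontr)
  assume "\<not> ?thesis"
  then have far: "\<forall>T\<in>G. \<forall>x\<in>V. f T x \<in> V \<longrightarrow> \<epsilon> \<le> cmod (lam T - 1)"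
    by (auto simp: not_less)
  obtain N where N: "\<And>Z. finite Z \<Longrightarrow> Z \<subseteq> sphere (0::complex) 1 \<Longrightarrow> separated_set \<epsilon> Z \<Longrightarrow> card Z \<le> N"
    using compact_separated_set_card_bound[OF compact_sphere[of "0::complex" 1] \<epsilon>] by metis
  obtain W Z where Z: "finite Z" "card Z = Suc N" "separated_set \<epsilon> Z"
    and Z_values: "\<forall>z\<in>Z. \<exists>T\<in>G. lam T = z \<and> f T ` W \<subseteq> V"
    using exists_separated_character_values[OF cont closed f_comp lam_comp lam_unimodular rec far \<epsilon> V order_refl,
        where n = "Suc N"]
    by (elim exE conjE) metis
  have "Z \<subseteq> sphere 0 1"
    using Z_values lam_unimodular by auto
  then show False
    using N[OF Z(1) _ Z(3)] Z(2) by simp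
qed

lemma complex_banach_scalar_one:
  assumes "complex_banach_scalar sm"
  shows "sm 1 x = x"
  using assms unfolding complex_banach_scalar_def by (metis of_real_1 scaleR_one)

lemma complex_banach_scalar_norm_diff:
  assumes "complex_banach_scalar sm"
  shows "norm (sm a x - x) = cmod (a - 1) * norm x"
proof -
  have "sm a x = sm ((a - 1) + 1) x" by simp
  also have "\<dots> = sm (a - 1) x + x"
    using assms complex_banach_scalar_one[OF assms] unfolding complex_banach_scalar_def by metis
  finally show ?thesis
    using assms unfolding complex_banach_scalar_def by simp
qed

lemma complex_banach_scalar_bounded_linear:
  assumes "complex_banach_scalar sm"
  shows "bounded_linear (sm a)"
proof (rule bounded_linear_intro[of _ "cmod a"])
  note sm = assms[unfolded complex_banach_scalar_def]
  show "sm a (x + y) = sm a x + sm a y" for x y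
    using sm by blast
  show "sm a (r *\<^sub>R x) = r *\<^sub>R sm a x" for r x
  proof -
    have "sm a (r *\<^sub>R x) = sm (a * complex_of_real r) x"
      using sm by metis
    also have "\<dots> = r *\<^sub>R sm a x"
      using sm by (metis mult.commute)
    finally show ?thesis .
  qed
  show "norm (sm a x) \<le> norm x * cmod a" for x
    using sm by (simp add: mult.commute)
qed

lemma complex_banach_scalar_cnj_cancel:
  assumes "complex_banach_scalar sm" "cmod a = 1"
  shows "sm (cnj a) (sm a x) = x"
proof -
  have "cnj a * a = 1"
    using complex_norm_square[of a] assms(2) by (simp add: mult.commute)
  moreover have "sm (cnj a) (sm a x) = sm (cnj a * a) x"
    using assms(1) unfolding complex_banach_scalar_def by blast
  ultimately show ?thesis
    using complex_banach_scalar_one[OF assms(1)] by simp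
qed

lemma open_contains_open_stable_under_relative_perturbation:
  fixes U :: "'a::real_normed_vector set"
  assumes "open U" "U \<noteq> {}"
  obtains V \<epsilon> where "open V" "V \<noteq> {}" "V \<subseteq> U" "\<epsilon> > 0"
    "\<And>y y'. y \<in> V \<Longrightarrow> norm (y' - y) \<le> \<epsilon> * norm y \<Longrightarrow> y' \<in> U"
proof -
  obtain x\<^sub>0 r where r: "r > 0" "ball x\<^sub>0 r \<subseteq> U"
    using assms by (meson ex_in_conv open_contains_ball)
  define \<epsilon> where "\<epsilon> = r / (2 * (norm x\<^sub>0 + r))"
  have pos: "norm x\<^sub>0 + r > 0" using r(1) by (smt (verit) norm_ge_zero)
  then have "\<epsilon> > 0" unfolding \<epsilon>_def using r(1) by simp
  moreover have "y' \<in> U" if y: "y \<in> ball x\<^sub>0 (r/2)" and y': "norm (y' - y) \<le> \<epsilon> * norm y" for y y'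
  proof -
    have "norm y < norm x\<^sub>0 + r"
      using y norm_triangle_ineq2[of y x\<^sub>0] r(1) by (simp add: dist_norm norm_minus_commute)
    then have "\<epsilon> * norm y < \<epsilon> * (norm x\<^sub>0 + r)"
      using \<open>\<epsilon> > 0\<close> by simp
    also have "\<dots> = r/2"
      unfolding \<epsilon>_def using pos by (simp add: field_simps)
    finally have "dist y y' < r/2"
      using y' by (simp add: dist_norm norm_minus_commute)
    then have "dist x\<^sub>0 y' < r"
      using y dist_triangle[of x\<^sub>0 y' y] by simp
    then show ?thesis using r(2) by auto
  qed
  moreover have "ball x\<^sub>0 (r/2) \<subseteq> U"
    using r by auto
  ultimately show thesis
    using that[of "ball x\<^sub>0 (r/2)" \<epsilon>] r(1) by auto
qed

lemma recurrent_set_twist_by_character: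
  fixes sm :: "complex \<Rightarrow> 'a::banach \<Rightarrow> 'a"
    and f :: "'b \<Rightarrow> 'a \<Rightarrow> 'a" and lam :: "'b \<Rightarrow> complex"
  assumes sm: "complex_banach_scalar sm"
    and cont: "\<forall>T\<in>G. continuous_on UNIV (f T)"
    and closed: "\<forall>T\<in>G. \<forall>S\<in>G. mul T S \<in> G"
    and f_comp: "\<forall>T\<in>G. \<forall>S\<in>G. f (mul T S) = f T \<circ> f S"
    and lam_comp: "\<forall>T\<in>G. \<forall>S\<in>G. lam (mul T S) = lam T * lam S"
    and lam_unimodular: "\<forall>T\<in>G. cmod (lam T) = 1"
    and rec: "recurrent_set (f ` G)"
  shows "recurrent_set ((\<lambda>T x. sm (lam T) (f T x)) ` G)"
  unfolding recurrent_set_def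
proof (intro allI impI)
  fix U :: "'a set"
  assume "open U \<and> U \<noteq> {}"
  then obtain V \<epsilon> where V: "open V" "V \<noteq> {}" "V \<subseteq> U" "\<epsilon> > 0"
    and stable: "\<And>y y'. y \<in> V \<Longrightarrow> norm (y' - y) \<le> \<epsilon> * norm y \<Longrightarrow> y' \<in> U"
    using open_contains_open_stable_under_relative_perturbation by metis
  obtain T x where T: "T \<in> G" "x \<in> V" "f T x \<in> V" "cmod (lam T - 1) < \<epsilon>"
    using recurrent_character_close_to_one[OF cont closed f_comp lam_comp lam_unimodular rec V(4,1,2)]
    by blast
  have "norm (sm (lam T) (f T x) - f T x) \<le> \<epsilon> * norm (f T x)"
    using T(4) by (simp add: complex_banach_scalar_norm_diff[OF sm] mult_right_mono)
  then have "sm (lam T) (f T x) \<in> (\<lambda>x. sm (lam T) (f T x)) ` U \<inter> U"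
    using stable[OF T(3)] T(2) V(3) by blast
  then show "\<exists>S\<in>(\<lambda>T x. sm (lam T) (f T x)) ` G. S ` U \<inter> U \<noteq> {}"
    using T(1) by (intro bexI[of _ "\<lambda>x. sm (lam T) (f T x)"]) auto
qed

theorem proposition3p6:
  fixes sm :: "complex \<Rightarrow> 'a::banach \<Rightarrow> 'a"
    and \<Gamma> :: "('a \<Rightarrow> 'a) set"
    and lam :: "('a \<Rightarrow> 'a) \<Rightarrow> complex"
  assumes "complex_banach_scalar sm"
    and "\<forall>T\<in>\<Gamma>. bounded_complex_operator sm T"
    and "\<forall>T\<in>\<Gamma>. \<forall>S\<in>\<Gamma>. T \<circ> S \<in> \<Gamma>"
    and "\<forall>T\<in>\<Gamma>. cmod (lam T) = 1"
    and "\<forall>T\<in>\<Gamma>. \<forall>S\<in>\<Gamma>. lam (T \<circ> S) = lam T * lam S"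
  shows "recurrent_set \<Gamma> \<longleftrightarrow> recurrent_set ((\<lambda>T. (\<lambda>x. sm (lam T) (T x))) ` \<Gamma>)"
proof -
  note sm = assms(1) and ops = assms(2)[unfolded bounded_complex_operator_def]
  define S where "S T = (\<lambda>x. sm (lam T) (T x))" for T
  have S_bounded_linear: "bounded_linear (S T)" if "T \<in> \<Gamma>" for T
    unfolding S_def using complex_banach_scalar_bounded_linear[OF sm] ops that
    by (blast intro: bounded_linear_compose)
  have S_comp: "S (T \<circ> T') = S T \<circ> S T'" if "T \<in> \<Gamma>" "T' \<in> \<Gamma>" for T T'
    using sm ops assms(5) that unfolding S_def complex_banach_scalar_def by (auto simp: fun_eq_iff)
  have untwist: "(\<lambda>T x. sm (cnj (lam T)) (S T x)) ` \<Gamma> = \<Gamma>"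
    using complex_banach_scalar_cnj_cancel[OF sm] assms(4) unfolding S_def by simp
  show ?thesis
  proof
    assume "recurrent_set \<Gamma>"
    then show "recurrent_set ((\<lambda>T x. sm (lam T) (T x)) ` \<Gamma>)"
      by (intro recurrent_set_twist_by_character[OF sm, where f = "\<lambda>T. T" and mul = "(\<circ>)"])
        (use assms(3-5) ops in \<open>auto intro: linear_continuous_on\<close>)
  next
    assume "recurrent_set ((\<lambda>T x. sm (lam T) (T x)) ` \<Gamma>)"
    then have "recurrent_set ((\<lambda>T x. sm (cnj (lam T)) (S T x)) ` \<Gamma>)"
      by (intro recurrent_set_twist_by_character[OF sm, where f = S and mul = "(\<circ>)"])
        (use assms(3-5) S_bounded_linear S_comp in \<open>auto intro: linear_continuous_on simp: S_def[abs_def]\<close>)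
    then show "recurrent_set \<Gamma>"
      by (simp only: untwist)
  qed
qed

end
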